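(* Let $M\subseteq V$ and let $SB$ be any satellite bridge for $M$. Then there exist a tree $R$ in $G$ with $M\subseteq N(R)$ and a function $F$ defined on $d^+(R)$ with values in $2^{\{1,\dots,K\}}$ such that (1) for every $u\in d^+(R)$, $F(u)$ is a hitting set of $\{\Gamma(v): v\in nb_R(u)\}$, and (2) $\sum_{u\in d^+(R)}|F(u)|\le |N(SB)|$.
   Context: Let $G=(V,E)$ be a finite, simple, undirected, connected graph with $|V|\ge 2$. Fix a positive integer $K$ and, for every $u\in V$, a nonempty set $\Gamma(u)\subseteq\{1,\dots,K\}$. Let $nb_G(u)$ be the neighbours of $u$ in $G$. For a tree $T$, $N(T)$ is its vertex set, $nb_T(u)$ the neighbours of $u$ in $T$, and $d^+(T)$ the set of vertices of degree greater than one in $T$. A hitting set of a collection $\mathcal C$ of subsets of a finite set $\mathcal F$ is a subset of $\mathcal F$ meeting every member of $\mathcal C$. The extended graph $\widetilde G=(\widetilde V,\widetilde E)$ of $G$: (i) initially $\widetilde V=V$, $\widetilde E=\emptyset$; (ii) for each $u\in V$ and each $i\in\bigcup_{v\in nb_G(u)}\Gamma(v)$, add a new vertex $\lambda(u,i)$ (satellite node of $u$; $u$ is its nuclear node); $\Psi(u)$ is the set of satellite nodes of $u$; (iii) for each $u\in V$, join every pair of distinct vertices of $\Psi(u)\cup\{u\}$; (iv) for each edge $\{u,v\}\in E$ (in each orientation $(u,v)$), each $i\in\Gamma(v)$, $j\in\Gamma(u)$, add edges $\{\lambda(u,i),\lambda(v,j)\}$, $\{\lambda(u,i),v\}$, $\{u,\lambda(v,j)\}$.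 $V_S=\widetilde V\setminus V$ is the set of satellite nodes. Given $M\subseteq V$, a satellite bridge is a (nonempty) subtree $SB$ of $\widetilde G$ all of whose vertices are satellite nodes and such that every vertex of $M$ is adjacent in $\widetilde G$ to at least one vertex of $SB$. *)

theory Defs
  imports Main
begin

definition simple_graph :: "'v set \<Rightarrow> 'v set set \<Rightarrow> bool" where
  "simple_graph V E \<longleftrightarrow> finite V \<and> (\<forall>e\<in>E. \<exists>u v. e = {u, v} \<and> u \<in> V \<and> v \<in> V \<and> u \<noteq> v)"

definition nb :: "'v set set \<Rightarrow> 'v \<Rightarrow> 'v set" where
  "nb E u = {v. {u, v} \<in> E \<and> v \<noteq> u}"

definition adj_rel :: "'v set set \<Rightarrow> ('v \<times> 'v) set" where
  "adj_rel E = {(a, b). {a, b} \<in> E}"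

definition connected_graph :: "'v set \<Rightarrow> 'v set set \<Rightarrow> bool" where
  "connected_graph V E \<longleftrightarrow> (\<forall>x\<in>V. \<forall>y\<in>V. (x, y) \<in> (adj_rel E \<inter> (V \<times> V))\<^sup>*)"

definition is_cycle :: "'v set set \<Rightarrow> 'v list \<Rightarrow> bool" where
  "is_cycle E xs \<longleftrightarrow> length xs \<ge> 3 \<and> distinct xs \<and>
     (\<forall>i < length xs. {xs ! i, xs ! ((i + 1) mod length xs)} \<in> E)"

definition acyclic_graph :: "'v set set \<Rightarrow> bool" where
  "acyclic_graph E \<longleftrightarrow> (\<nexists>xs. is_cycle E xs)"

definition subtree :: "'v set \<Rightarrow> 'v set set \<Rightarrow> 'v set \<Rightarrow> 'v set set \<Rightarrow> bool" where
  "subtree V E N T \<longleftrightarrow> N \<noteq> {} \<and> N \<subseteq> V \<and> T \<subseteq> E \<and> (\<forall>e\<in>T. e \<subseteq> N)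
     \<and> simple_graph N T \<and> connected_graph N T \<and> acyclic_graph T"

definition dplus :: "'v set \<Rightarrow> 'v set set \<Rightarrow> 'v set" where
  "dplus N T = {u \<in> N. card (nb T u) > 1}"

definition hitting_set :: "'f set \<Rightarrow> 'f set set \<Rightarrow> 'f set \<Rightarrow> bool" where
  "hitting_set Fs C H \<longleftrightarrow> H \<subseteq> Fs \<and> (\<forall>S\<in>C. S \<inter> H \<noteq> {})"

text \<open>Nodes of the extended graph: nuclear nodes and satellite nodes lambda(u,i).\<close>
datatype 'v enode = Nuc 'v | Sat 'v nat

definition sat_labels :: "'v set set \<Rightarrow> ('v \<Rightarrow> nat set) \<Rightarrow> 'v \<Rightarrow> nat set" where
  "sat_labels E \<Gamma> u = (\<Union>v\<in>nb E u. \<Gamma> v)"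

definition Psi :: "'v set set \<Rightarrow> ('v \<Rightarrow> nat set) \<Rightarrow> 'v \<Rightarrow> 'v enode set" where
  "Psi E \<Gamma> u = Sat u ` sat_labels E \<Gamma> u"

definition satellites :: "'v set \<Rightarrow> 'v set set \<Rightarrow> ('v \<Rightarrow> nat set) \<Rightarrow> 'v enode set" where
  "satellites V E \<Gamma> = (\<Union>u\<in>V. Psi E \<Gamma> u)"

definition ext_V :: "'v set \<Rightarrow> 'v set set \<Rightarrow> ('v \<Rightarrow> nat set) \<Rightarrow> 'v enode set" where
  "ext_V V E \<Gamma> = Nuc ` V \<union> satellites V E \<Gamma>"

definition ext_E :: "'v set \<Rightarrow> 'v set set \<Rightarrow> ('v \<Rightarrow> nat set) \<Rightarrow> 'v enode set set" where
  "ext_E V E \<Gamma> =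
     {{x, y} | x y u. u \<in> V \<and> x \<in> insert (Nuc u) (Psi E \<Gamma> u)
                     \<and> y \<in> insert (Nuc u) (Psi E \<Gamma> u) \<and> x \<noteq> y}
   \<union> (\<Union>u\<in>V. \<Union>v\<in>V. if {u, v} \<in> E then
        {{Sat u i, Sat v j} | i j. i \<in> \<Gamma> v \<and> j \<in> \<Gamma> u}
      \<union> {{Sat u i, Nuc v} | i. i \<in> \<Gamma> v}
      \<union> {{Nuc u, Sat v j} | j. j \<in> \<Gamma> u}
     else {})"

definition satellite_bridge ::
  "'v set \<Rightarrow> 'v set set \<Rightarrow> ('v \<Rightarrow> nat set) \<Rightarrow> 'v set \<Rightarrow> 'v enode set \<Rightarrow> 'v enode set set \<Rightarrow> bool" where
  "satellite_bridge V E \<Gamma> M NS TS \<longleftrightarrow>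
     subtree (ext_V V E \<Gamma>) (ext_E V E \<Gamma>) NS TS \<and> NS \<subseteq> satellites V E \<Gamma>
     \<and> (\<forall>m\<in>M. \<exists>s\<in>NS. {Nuc m, s} \<in> ext_E V E \<Gamma>)"

end

theory Submission
  imports Defs
begin

(* Let U be the set of nuclei u having some satellite Sat u i in the bridge NS,
   and let labels u = {i. Sat u i \<in> NS}.  Two nuclei joined by an edge of G whose labels meet
   each other's colour sets form a "core edge"; projecting paths of the bridge tree onto their
   nuclei shows that U is connected by core edges.  A vertex m of M outside U is adjacent in
   the extended graph to a bridge satellite Sat p i with p \<noteq> m, which yields an edge {m, p}
   of G with i \<in> \<Gamma> m; we attach m to such an anchor p as a pendant vertex.  The resulting
   "skeleton" on U \<union> M is connected, so it has a spanning tree R.  Pendant vertices have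
   degree one, hence every branch vertex u of R is a nucleus, and labels u hits the colour set
   of every R-neighbour.  Since the sets labels u are disjoint slices of NS, their total size
   is at most |NS|. *)

lemma adj_rel_restrict_sym: "sym (adj_rel T \<inter> W \<times> W)"
  unfolding adj_rel_def sym_def by (auto simp: insert_commute)

lemma chain_rtrancl:
  assumes "\<And>k. i \<le> k \<Longrightarrow> k < j \<Longrightarrow> (f k, f (Suc k)) \<in> R" and "i \<le> j"
  shows "(f i, f j) \<in> R\<^sup>*"
  using assms(2,1)
proof (induction j rule: dec_induct)
  case base then show ?case by simp
next
  case (step j) then show ?case by (meson le_less_trans less_Suc_eq rtrancl.rtrancl_into_rtrancl)
qed

lemma connected_graph_transfer:
  assumes "connected_graph W T"
    and "\<And>a b. {a, b} \<in> T \<Longrightarrow> a \<in> W \<Longrightarrow> b \<in> W \<Longrightarrow> (a, b) \<in> (adj_rel T' \<inter> W \<times> W)\<^sup>*"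
  shows "connected_graph W T'"
proof -
  have "adj_rel T \<inter> W \<times> W \<subseteq> (adj_rel T' \<inter> W \<times> W)\<^sup>*"
    using assms(2) by (auto simp: adj_rel_def)
  then have "(adj_rel T \<inter> W \<times> W)\<^sup>* \<subseteq> (adj_rel T' \<inter> W \<times> W)\<^sup>*"
    by (rule rtrancl_subset_rtrancl)
  then show ?thesis using assms(1) unfolding connected_graph_def by blast
qed

lemma cycle_edge_redundant:
  assumes cyc: "is_cycle T xs" and TW: "\<forall>e\<in>T. e \<subseteq> W"
  shows "(xs ! 1, xs ! 0) \<in> (adj_rel (T - {{xs ! 0, xs ! 1}}) \<inter> W \<times> W)\<^sup>*"
proof -
  define n where "n = length xs"
  define f where "f k = xs ! (k mod n)" for k
  have n3: "n \<ge> 3" and dist: "distinct xs"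
    and edge: "\<And>i. i < n \<Longrightarrow> {xs ! i, xs ! ((i + 1) mod n)} \<in> T"
    using cyc unfolding is_cycle_def n_def by auto
  have "(f k, f (Suc k)) \<in> adj_rel (T - {{xs ! 0, xs ! 1}}) \<inter> W \<times> W"
    if "1 \<le> k" "k < n" for k
  proof -
    have fk: "f k = xs ! k" and fSk: "f (Suc k) = xs ! ((k + 1) mod n)"
      using that by (simp_all add: f_def)
    have e: "{f k, f (Suc k)} \<in> T" using edge[OF \<open>k < n\<close>] fk fSk by simp
    have idx: "xs ! a = xs ! b \<longleftrightarrow> a = b" if "a < n" "b < n" for a b
      using dist that unfolding n_def by (simp add: nth_eq_iff_index_eq)
    have "{f k, f (Suc k)} \<noteq> {xs ! 0, xs ! 1}"
    proof
      assume eq: "{f k, f (Suc k)} = {xs ! 0, xs ! 1}"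
      then have "xs ! k = xs ! 1" using idx[of k 0] \<open>1 \<le> k\<close> \<open>k < n\<close> n3 fk
        by (auto simp: doubleton_eq_iff)
      then have "k = 1" using idx[of k 1] \<open>k < n\<close> n3 by simp
      then have "f (Suc k) = xs ! 2" using n3 fSk by (simp add: numeral_2_eq_2)
      then show False using eq idx[of 2 0] idx[of 2 1] n3 by (auto simp: doubleton_eq_iff)
    qed
    then show ?thesis using e TW unfolding adj_rel_def by auto
  qed
  then have "(f 1, f n) \<in> (adj_rel (T - {{xs ! 0, xs ! 1}}) \<inter> W \<times> W)\<^sup>*"
    using n3 by (intro chain_rtrancl) auto
  then show ?thesis using n3 by (simp add: f_def)
qed

lemma cycle_edge_removal_connected:
  assumes conn: "connected_graph W T" and cyc: "is_cycle T xs" and TW: "\<forall>e\<in>T. e \<subseteq> W"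
  shows "connected_graph W (T - {{xs ! 0, xs ! 1}})"
  using conn
proof (rule connected_graph_transfer)
  define R where "R = adj_rel (T - {{xs ! 0, xs ! 1}}) \<inter> W \<times> W"
  have path_10: "(xs ! 1, xs ! 0) \<in> R\<^sup>*"
    unfolding R_def by (rule cycle_edge_redundant[OF cyc TW])
  have "sym (R\<^sup>*)" unfolding R_def by (rule sym_rtrancl[OF adj_rel_restrict_sym])
  then have path_01: "(xs ! 0, xs ! 1) \<in> R\<^sup>*" using path_10 by (rule symD)
  fix a b assume ab: "{a, b} \<in> T" "a \<in> W" "b \<in> W"
  show "(a, b) \<in> R\<^sup>*"
  proof (cases "{a, b} = {xs ! 0, xs ! 1}")
    case True
    then have "(a, b) = (xs ! 0, xs ! 1) \<or> (a, b) = (xs ! 1, xs ! 0)"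
      by (simp add: doubleton_eq_iff)
    then show ?thesis using path_10 path_01 by metis
  next
    case False
    then have "(a, b) \<in> R" using ab unfolding R_def adj_rel_def by simp
    then show ?thesis by (rule r_into_rtrancl)
  qed
qed

text \<open>Every finite connected graph has a spanning tree: a connected edge set of minimum size
  contains no cycle.\<close>
lemma spanning_tree:
  assumes fin: "finite W" and HW: "\<forall>e\<in>H. e \<subseteq> W" and conn: "connected_graph W H"
  shows "\<exists>T\<subseteq>H. connected_graph W T \<and> acyclic_graph T"
proof -
  have finH: "finite H"
    using HW fin by (meson Pow_iff finite_Pow_iff finite_subset subsetI)
  obtain T where T: "T \<subseteq> H" "connected_graph W T"
    and min: "\<And>T'. T' \<subseteq> H \<Longrightarrow> connected_graph W T' \<Longrightarrow> card T \<le> card T'"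
    using ex_has_least_nat[of "\<lambda>T. T \<subseteq> H \<and> connected_graph W T" H card] conn by blast
  have "acyclic_graph T"
  proof (rule ccontr)
    assume "\<not> acyclic_graph T"
    then obtain xs where cyc: "is_cycle T xs" unfolding acyclic_graph_def by blast
    then have "{xs ! 0, xs ! 1} \<in> T" unfolding is_cycle_def by force
    then have "card (T - {{xs ! 0, xs ! 1}}) < card T"
      using finite_subset[OF T(1) finH] by (rule card_Diff1_less[rotated])
    moreover have "connected_graph W (T - {{xs ! 0, xs ! 1}})"
      using cycle_edge_removal_connected[OF T(2) cyc] T(1) HW by blast
    ultimately show False using min[of "T - {{xs ! 0, xs ! 1}}"] T(1) by auto
  qed
  then show ?thesis using T by blast
qed

lemma connected_graph_attach:
  assumes conn: "connected_graph U P" and "P \<subseteq> H" and "U \<subseteq> W" and "U \<noteq> {}"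
    and attach: "\<And>w. w \<in> W - U \<Longrightarrow> \<exists>u\<in>U. {w, u} \<in> H"
  shows "connected_graph W H"
proof -
  define R where "R = adj_rel H \<inter> W \<times> W"
  have "adj_rel P \<inter> U \<times> U \<subseteq> R"
    using assms(2,3) unfolding R_def adj_rel_def by blast
  then have core: "(adj_rel P \<inter> U \<times> U)\<^sup>* \<subseteq> R\<^sup>*" by (rule rtrancl_mono)
  obtain u0 where u0: "u0 \<in> U" using \<open>U \<noteq> {}\<close> by blast
  have core_to_hub: "(u, u0) \<in> R\<^sup>*" if "u \<in> U" for u
    using conn that u0 core unfolding connected_graph_def by blast
  have to_hub: "(w, u0) \<in> R\<^sup>*" if "w \<in> W" for w
  proof (cases "w \<in> U")
    case True
    then show ?thesis by (rule core_to_hub)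
  next
    case False
    then obtain u where u: "u \<in> U" "{w, u} \<in> H" using attach \<open>w \<in> W\<close> by blast
    then have "(w, u) \<in> R" using \<open>w \<in> W\<close> \<open>U \<subseteq> W\<close> unfolding R_def adj_rel_def by blast
    then show ?thesis using core_to_hub[OF u(1)] by (rule converse_rtrancl_into_rtrancl)
  qed
  have sym: "sym (R\<^sup>*)" unfolding R_def by (rule sym_rtrancl[OF adj_rel_restrict_sym])
  show ?thesis
    unfolding connected_graph_def R_def[symmetric]
  proof (intro ballI)
    fix x y assume "x \<in> W" "y \<in> W"
    then have "(x, u0) \<in> R\<^sup>*" "(u0, y) \<in> R\<^sup>*"
      using to_hub sym by (auto dest: symD)
    then show "(x, y) \<in> R\<^sup>*" by (rule rtrancl_trans)
  qed
qed

lemma subtree_intro: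
  assumes G: "simple_graph V E" and "W \<subseteq> V" and "W \<noteq> {}" and "T \<subseteq> E"
    and TW: "\<forall>e\<in>T. e \<subseteq> W" and "connected_graph W T" and "acyclic_graph T"
  shows "subtree V E W T"
proof -
  have "finite W" using G \<open>W \<subseteq> V\<close> finite_subset unfolding simple_graph_def by blast
  moreover have "\<exists>a b. e = {a, b} \<and> a \<in> W \<and> b \<in> W \<and> a \<noteq> b" if "e \<in> T" for e
  proof -
    obtain a b where "e = {a, b}" "a \<noteq> b"
      using G \<open>T \<subseteq> E\<close> \<open>e \<in> T\<close> unfolding simple_graph_def by blast
    then show ?thesis using TW \<open>e \<in> T\<close> by blast
  qed
  ultimately have "simple_graph W T" unfolding simple_graph_def by blast
  then show ?thesis using assms unfolding subtree_def by blast
qed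

lemma sat_sat_edge:
  assumes "{Sat p i, Sat q j} \<in> ext_E V E \<Gamma>" and "p \<noteq> q"
  shows "{p, q} \<in> E \<and> i \<in> \<Gamma> q \<and> j \<in> \<Gamma> p"
  using assms by (auto simp: ext_E_def Psi_def doubleton_eq_iff insert_commute split: if_splits)

lemma nuc_sat_edge:
  assumes "{Nuc m, Sat p i} \<in> ext_E V E \<Gamma>"
  shows "p = m \<or> ({p, m} \<in> E \<and> i \<in> \<Gamma> m)"
  using assms by (auto simp: ext_E_def Psi_def doubleton_eq_iff insert_commute split: if_splits)

fun nucleus :: "'v enode \<Rightarrow> 'v" where
  "nucleus (Nuc u) = u"
| "nucleus (Sat u i) = u"

locale bridge_setting =
  fixes V :: "'v set" and E :: "'v set set" and \<Gamma> :: "'v \<Rightarrow> nat set"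
    and M :: "'v set" and NS :: "'v enode set" and TS :: "'v enode set set"
  assumes graph: "simple_graph V E"
    and M_sub: "M \<subseteq> V"
    and bridge: "satellite_bridge V E \<Gamma> M NS TS"
begin

definition labels :: "'v \<Rightarrow> nat set" where
  "labels u = {i. Sat u i \<in> NS}"

definition nuclei :: "'v set" where
  "nuclei = {u. labels u \<noteq> {}}"

definition core_edges :: "'v set set" where
  "core_edges = {{a, b} | a b. {a, b} \<in> E \<and> labels a \<inter> \<Gamma> b \<noteq> {} \<and> labels b \<inter> \<Gamma> a \<noteq> {}}"

definition anchor :: "'v \<Rightarrow> 'v" where
  "anchor m = (SOME p. {p, m} \<in> E \<and> labels p \<inter> \<Gamma> m \<noteq> {})"

definition skeleton_vertices :: "'v set" where
  "skeleton_vertices = nuclei \<union> M"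

definition skeleton_edges :: "'v set set" where
  "skeleton_edges = core_edges \<union> {{m, anchor m} | m. m \<in> M - nuclei}"

lemma NS_finite: "finite NS"
  using bridge unfolding satellite_bridge_def subtree_def simple_graph_def by blast

lemma NS_satellite: "x \<in> NS \<Longrightarrow> \<exists>u i. x = Sat u i \<and> u \<in> V \<and> i \<in> sat_labels E \<Gamma> u"
  using bridge unfolding satellite_bridge_def satellites_def Psi_def by blast

lemma label_witness:
  assumes "i \<in> labels u"
  shows "u \<in> V \<and> (\<exists>v. {u, v} \<in> E \<and> v \<in> V \<and> i \<in> \<Gamma> v)"
proof -
  have "u \<in> V" and "i \<in> sat_labels E \<Gamma> u"
    using NS_satellite assms unfolding labels_def by fastforce+
  then obtain v where "{u, v} \<in> E" "i \<in> \<Gamma> v"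
    unfolding sat_labels_def nb_def by blast
  moreover have "v \<in> V"
    using graph \<open>{u, v} \<in> E\<close> unfolding simple_graph_def by (metis doubleton_eq_iff)
  ultimately show ?thesis using \<open>u \<in> V\<close> by blast
qed

lemma labels_range:
  assumes "\<forall>v\<in>V. \<Gamma> v \<subseteq> S"
  shows "labels u \<subseteq> S"
  using label_witness assms by blast

lemma nuclei_subset: "nuclei \<subseteq> V"
  using label_witness unfolding nuclei_def by blast

lemma nuclei_nonempty: "nuclei \<noteq> {}"
proof -
  have "NS \<noteq> {}" using bridge unfolding satellite_bridge_def subtree_def by blast
  then show ?thesis using NS_satellite unfolding nuclei_def labels_def by fastforce
qed

text \<open>The label sets are disjoint slices of the bridge, so their sizes add up to at most \<open>|NS|\<close>.\<close>
lemma sum_labels_le: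
  assumes "finite A"
  shows "(\<Sum>u\<in>A. card (labels u)) \<le> card NS"
proof -
  have "finite (labels u)" for u
    using finite_vimageI[OF NS_finite, of "Sat u"] by (simp add: labels_def vimage_def inj_def)
  then have "(\<Sum>u\<in>A. card (labels u)) = card (SIGMA u:A. labels u)"
    using assms by simp
  also have "\<dots> \<le> card NS"
    by (rule card_inj_on_le[of "\<lambda>(u, i). Sat u i", OF _ _ NS_finite])
      (auto simp: inj_on_def labels_def)
  finally show ?thesis .
qed


lemma bridge_edge_projects:
  assumes "{x, y} \<in> TS" "x \<in> NS" "y \<in> NS" "nucleus x \<noteq> nucleus y"
  shows "(nucleus x, nucleus y) \<in> adj_rel core_edges \<inter> nuclei \<times> nuclei"
proof -
  obtain p i q j where xy: "x = Sat p i" "y = Sat q j"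
    using NS_satellite assms(2,3) by blast
  have "TS \<subseteq> ext_E V E \<Gamma>"
    using bridge unfolding satellite_bridge_def subtree_def by blast
  then have "{p, q} \<in> E \<and> i \<in> \<Gamma> q \<and> j \<in> \<Gamma> p"
    using sat_sat_edge assms xy by fastforce
  moreover have "i \<in> labels p" "j \<in> labels q"
    using assms(2,3) xy unfolding labels_def by auto
  ultimately have "{p, q} \<in> core_edges" "p \<in> nuclei" "q \<in> nuclei"
    unfolding core_edges_def nuclei_def by blast+
  then show ?thesis using xy unfolding adj_rel_def by simp
qed

text \<open>Projecting paths of the bridge tree to their nuclei connects all nuclei by core edges.\<close>
lemma nuclei_connected: "connected_graph nuclei core_edges"
  unfolding connected_graph_def
proof (intro ballI)
  have project: "(nucleus x, nucleus y) \<in> (adj_rel core_edges \<inter> nuclei \<times> nuclei)\<^sup>*"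
    if "(x, y) \<in> (adj_rel TS \<inter> NS \<times> NS)\<^sup>*" for x y
    using that
  proof (induction rule: rtrancl_induct)
    case (step y z)
    then have "{y, z} \<in> TS" "y \<in> NS" "z \<in> NS" unfolding adj_rel_def by auto
    then show ?case
      using step.IH bridge_edge_projects[of y z]
      by (cases "nucleus y = nucleus z") (auto intro: rtrancl_into_rtrancl)
  qed simp
  have "connected_graph NS TS"
    using bridge unfolding satellite_bridge_def subtree_def by blast
  fix u v assume "u \<in> nuclei" "v \<in> nuclei"
  then obtain i j where "Sat u i \<in> NS" "Sat v j \<in> NS"
    unfolding nuclei_def labels_def by blast
  then show "(u, v) \<in> (adj_rel core_edges \<inter> nuclei \<times> nuclei)\<^sup>*"
    using project \<open>connected_graph NS TS\<close> unfolding connected_graph_def by fastforce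
qed

text \<open>A vertex of \<open>M\<close> without satellites in the bridge is adjacent to a bridge satellite
  \<open>Sat p i\<close> of another nucleus \<open>p\<close>; this forces \<open>{p, m} \<in> E\<close> and \<open>i \<in> \<Gamma> m\<close>.\<close>
lemma anchor_spec:
  assumes "m \<in> M - nuclei"
  shows "{anchor m, m} \<in> E \<and> labels (anchor m) \<inter> \<Gamma> m \<noteq> {}"
proof -
  obtain s where s: "s \<in> NS" "{Nuc m, s} \<in> ext_E V E \<Gamma>"
    using bridge assms unfolding satellite_bridge_def by blast
  then obtain p i where pi: "s = Sat p i" using NS_satellite by blast
  have "p \<noteq> m" using assms s(1) pi unfolding nuclei_def labels_def by blast
  then have "{p, m} \<in> E \<and> labels p \<inter> \<Gamma> m \<noteq> {}"
    using nuc_sat_edge[of m p i] s pi unfolding labels_def by blast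
  then show ?thesis unfolding anchor_def by (rule someI)
qed

lemma anchor_nucleus: "m \<in> M - nuclei \<Longrightarrow> anchor m \<in> nuclei"
  using anchor_spec unfolding nuclei_def by blast

lemma core_edge_ends: "{a, b} \<in> core_edges \<Longrightarrow> a \<in> nuclei \<and> b \<in> nuclei"
  unfolding core_edges_def nuclei_def by (auto simp: doubleton_eq_iff)

lemma skeleton_edges_subset: "skeleton_edges \<subseteq> E"
  using anchor_spec unfolding skeleton_edges_def core_edges_def by (auto simp: insert_commute)

lemma skeleton_edges_within: "\<forall>e\<in>skeleton_edges. e \<subseteq> skeleton_vertices"
  using core_edge_ends anchor_nucleus
  unfolding skeleton_edges_def skeleton_vertices_def core_edges_def by blast

text \<open>The skeleton is connected: the core is, and the remaining vertices are pendant.\<close>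
lemma skeleton_connected: "connected_graph skeleton_vertices skeleton_edges"
proof (rule connected_graph_attach[OF nuclei_connected _ _ nuclei_nonempty])
  show "core_edges \<subseteq> skeleton_edges" "nuclei \<subseteq> skeleton_vertices"
    unfolding skeleton_edges_def skeleton_vertices_def by auto
  fix w assume "w \<in> skeleton_vertices - nuclei"
  then have "w \<in> M - nuclei" unfolding skeleton_vertices_def by blast
  then show "\<exists>u\<in>nuclei. {w, u} \<in> skeleton_edges"
    using anchor_nucleus unfolding skeleton_edges_def by blast
qed

lemma skeleton_leaf:
  assumes "u \<notin> nuclei"
  shows "nb skeleton_edges u \<subseteq> {anchor u}"
proof
  fix v assume "v \<in> nb skeleton_edges u"
  then have "{u, v} \<in> skeleton_edges" "v \<noteq> u" unfolding nb_def by auto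
  then show "v \<in> {anchor u}"
    using assms core_edge_ends anchor_nucleus
    unfolding skeleton_edges_def by (auto simp: doubleton_eq_iff)
qed

lemma labels_hit_neighbour:
  assumes "u \<in> nuclei" and "v \<in> nb skeleton_edges u"
  shows "\<Gamma> v \<inter> labels u \<noteq> {}"
proof -
  have "{u, v} \<in> skeleton_edges" using assms(2) unfolding nb_def by auto
  then consider "{u, v} \<in> core_edges" | m where "{u, v} = {m, anchor m}" "m \<in> M - nuclei"
    unfolding skeleton_edges_def by blast
  then show ?thesis
  proof cases
    case 1
    then show ?thesis unfolding core_edges_def by (auto simp: doubleton_eq_iff)
  next
    case 2
    then have "u = anchor m" "v = m" using assms(1) by (auto simp: doubleton_eq_iff)
    then show ?thesis using anchor_spec[OF 2(2)] by blast
  qed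
qed


lemma branch_vertices_nuclei:
  assumes "T \<subseteq> skeleton_edges"
  shows "dplus skeleton_vertices T \<subseteq> nuclei"
proof
  fix u assume u: "u \<in> dplus skeleton_vertices T"
  show "u \<in> nuclei"
  proof (rule ccontr)
    assume "u \<notin> nuclei"
    then have "nb T u \<subseteq> {anchor u}" using skeleton_leaf assms unfolding nb_def by blast
    then have "card (nb T u) \<le> 1" using subset_singletonD by fastforce
    then show False using u unfolding dplus_def by simp
  qed
qed

end

text \<open>The skeleton's spanning tree, with the bridge labels as hitting sets, is the required tree.\<close>
theorem lemma4:
  fixes V :: "'v set" and E :: "'v set set" and K :: nat and \<Gamma> :: "'v \<Rightarrow> nat set"
    and M :: "'v set" and NS :: "'v enode set" and TS :: "'v enode set set"
  assumes "simple_graph V E" and "connected_graph V E" and "card V \<ge> 2"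
    and "K > 0"
    and "\<forall>u\<in>V. \<Gamma> u \<noteq> {} \<and> \<Gamma> u \<subseteq> {1..K}"
    and "M \<subseteq> V"
    and "satellite_bridge V E \<Gamma> M NS TS"
  shows "\<exists>NR TR F. subtree V E NR TR \<and> M \<subseteq> NR
           \<and> (\<forall>u\<in>dplus NR TR. hitting_set {1..K} (\<Gamma> ` nb TR u) (F u))
           \<and> (\<Sum>u\<in>dplus NR TR. card (F u)) \<le> card NS"
proof -
  interpret bridge_setting V E \<Gamma> M NS TS
    using assms(1,6,7) by unfold_locales
  have WV: "skeleton_vertices \<subseteq> V"
    using nuclei_subset assms(6) unfolding skeleton_vertices_def by blast
  have fin: "finite skeleton_vertices"
    using assms(1) WV finite_subset unfolding simple_graph_def by blast
  obtain T where T: "T \<subseteq> skeleton_edges" "connected_graph skeleton_vertices T" "acyclic_graph T"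
    using spanning_tree[OF fin skeleton_edges_within skeleton_connected] by blast
  have "subtree V E skeleton_vertices T"
  proof (rule subtree_intro[OF assms(1) WV _ _ _ T(2,3)])
    show "skeleton_vertices \<noteq> {}" using nuclei_nonempty unfolding skeleton_vertices_def by blast
    show "T \<subseteq> E" using T(1) skeleton_edges_subset by (rule order_trans)
    show "\<forall>e\<in>T. e \<subseteq> skeleton_vertices" using T(1) skeleton_edges_within by blast
  qed
  moreover have "M \<subseteq> skeleton_vertices" unfolding skeleton_vertices_def by blast
  moreover have "hitting_set {1..K} (\<Gamma> ` nb T u) (labels u)"
    if "u \<in> dplus skeleton_vertices T" for u
  proof -
    have "u \<in> nuclei" using branch_vertices_nuclei[OF T(1)] that by blast
    moreover have "nb T u \<subseteq> nb skeleton_edges u" using T(1) unfolding nb_def by blast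
    ultimately have "\<forall>S\<in>\<Gamma> ` nb T u. S \<inter> labels u \<noteq> {}"
      using labels_hit_neighbour by blast
    moreover have "labels u \<subseteq> {1..K}" using labels_range assms(5) by blast
    ultimately show ?thesis unfolding hitting_set_def by blast
  qed
  moreover have "(\<Sum>u\<in>dplus skeleton_vertices T. card (labels u)) \<le> card NS"
  proof (rule sum_labels_le)
    show "finite (dplus skeleton_vertices T)"
      using fin unfolding dplus_def by simp
  qed
  ultimately show ?thesis by blast
qed

end
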